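(* For every $\varepsilon>0$ and $M>0$ there exists $\delta>0$ such that the following holds. Let $u\in U$ and let $(u_n)_{n\ge1}$ be a sequence in $U$ such that $\{u\}\cup\{u_n:n\ge1\}$ is bounded, all first super-diagonal entries $u_{i,i+1}$ and $(u_n)_{i,i+1}$ have absolute value at most $M$, and $|(u_n)_{i,i+1}-u_{i,i+1}|\le\delta$ for all $n$ and $i$. Then for all $i,j$, $\limsup_{n\to\infty}\left|\theta_{1/n}(u_1u_2\cdots u_n)_{i,j}-\theta_{1/n}(u^n)_{i,j}\right|<\varepsilon$.
   Context: $U$ is the group of $d\times d$ upper triangular real matrices with diagonal entries $1$; for $t>0$, $(\theta_t(u))_{i,j}=t^{j-i}u_{i,j}$ for $j\ge i$. *)

theory Defs
  imports "Jordan_Normal_Form.Matrix" "HOL-Library.Extended_Real" "HOL-Library.Liminf_Limsup"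
begin

definition unitri :: "nat \<Rightarrow> real mat set" where
  "unitri d = {u \<in> carrier_mat d d. \<forall>i<d. \<forall>j<d.
      (j < i \<longrightarrow> u $$ (i, j) = 0) \<and> (i = j \<longrightarrow> u $$ (i, j) = 1)}"

definition theta :: "real \<Rightarrow> real mat \<Rightarrow> real mat" where
  "theta t u = mat (dim_row u) (dim_col u)
      (\<lambda>(i, j). if i \<le> j then t ^ (j - i) * u $$ (i, j) else u $$ (i, j))"

definition seq_prod :: "nat \<Rightarrow> (nat \<Rightarrow> real mat) \<Rightarrow> nat \<Rightarrow> real mat" where
  "seq_prod d us n = foldl (*) (1\<^sub>m d) (map us [1..<Suc n])"

definition bounded_mats :: "real mat set \<Rightarrow> bool" where
  "bounded_mats S \<longleftrightarrow> (\<exists>B. \<forall>A\<in>S. \<forall>i<dim_row A. \<forall>j<dim_col A. \<bar>A $$ (i, j)\<bar> \<le> B)"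

end

theory Submission
  imports Defs
begin

(* Write P N = u_1 ... u_N and Q N = u^N. Because the factors are unitriangular, the (i, j) entry
   of P (n + 1) - P n is the sum over i <= k < j of (P n)_(i,k) (u_(n+1))_(k,j). Summing these
   increments, induction on m = j - i shows that an entry at distance m from the diagonal is
   O(N^m), and that only the term through the superdiagonal entry (k = j - 1) contributes to
   the top order: |(P N)_(i,i+m)| <= M^m N^m + O(N^(m-1)). The same induction applied to P N - Q N,
   whose factors have delta-close superdiagonals, gives
   |(P N - Q N)_(i,i+m)| <= m delta M^(m-1) N^m + O(N^(m-1)).
   The dilation theta_(1/N) divides this entry by N^m, so the limsup is at most m delta M^(m-1),
   which is below epsilon once delta is small in terms of d and M. *)

section \<open>Products of unitriangular matrices\<close>

lemma unitriD:
  assumes "A \<in> unitri d"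
  shows "A \<in> carrier_mat d d" "\<And>i j. j < i \<Longrightarrow> i < d \<Longrightarrow> A $$ (i, j) = 0"
    "\<And>i. i < d \<Longrightarrow> A $$ (i, i) = 1"
  using assms unfolding unitri_def by auto

lemma unitri_entry_le_diag:
  assumes "A \<in> unitri d" "B \<in> unitri d" "j \<le> i" "i < d"
  shows "A $$ (i, j) = B $$ (i, j)"
  using unitriD[OF assms(1)] unitriD[OF assms(2)] assms(3,4)
  by (cases "j = i") auto

lemma unitri_mult_entry:
  assumes A: "A \<in> unitri d" and V: "V \<in> unitri d" and ij: "i \<le> j" "j < d"
  shows "(A * V) $$ (i, j) = A $$ (i, j) + (\<Sum>k\<in>{i..<j}. A $$ (i, k) * V $$ (k, j))"
proof -
  have "(A * V) $$ (i, j) = (\<Sum>k\<in>{0..<d}. A $$ (i, k) * V $$ (k, j))"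
    using unitriD(1)[OF A] unitriD(1)[OF V] ij by (simp add: scalar_prod_def)
  also have "\<dots> = (\<Sum>k\<in>{i..j}. A $$ (i, k) * V $$ (k, j))"
    using ij unitriD(2)[OF A, of _ i] unitriD(2)[OF V, of j]
    by (intro sum.mono_neutral_right) (auto simp: not_le)
  also have "\<dots> = (\<Sum>k\<in>{i..<j}. A $$ (i, k) * V $$ (k, j)) + A $$ (i, j)"
    using ij unitriD(3)[OF V] by (simp add: atLeastLessThanSuc_atLeastAtMost[symmetric])
  finally show ?thesis by simp
qed

lemma unitri_mult:
  assumes A: "A \<in> unitri d" and V: "V \<in> unitri d"
  shows "A * V \<in> unitri d"
proof -
  have "(A * V) $$ (i, j) = 0" if "j < i" "i < d" for i j
  proof -
    have "(A * V) $$ (i, j) = (\<Sum>k\<in>{0..<d}. A $$ (i, k) * V $$ (k, j))"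
      using unitriD(1)[OF A] unitriD(1)[OF V] that by (simp add: scalar_prod_def)
    also have "\<dots> = 0"
      using that unitriD(2)[OF A, of _ i] unitriD(2)[OF V, of j]
      by (intro sum.neutral ballI) (metis atLeastLessThan_iff mult_eq_0_iff not_le order.strict_trans1)
    finally show ?thesis .
  qed
  moreover have "(A * V) $$ (i, i) = 1" if "i < d" for i
    using unitri_mult_entry[OF A V, of i i] that unitriD(3)[OF A] by simp
  ultimately show ?thesis
    using unitriD(1)[OF A] unitriD(1)[OF V] unfolding unitri_def by auto
qed

lemma one_unitri: "1\<^sub>m d \<in> unitri d"
  unfolding unitri_def by auto

lemma seq_prod_0: "seq_prod d vs 0 = 1\<^sub>m d"
  unfolding seq_prod_def by simp

lemma seq_prod_Suc: "seq_prod d vs (Suc n) = seq_prod d vs n * vs (Suc n)"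
  unfolding seq_prod_def by simp

lemma seq_prod_unitri:
  assumes "\<forall>n\<ge>1. vs n \<in> unitri d"
  shows "seq_prod d vs n \<in> unitri d"
  by (induction n) (use assms in \<open>auto simp: seq_prod_0 seq_prod_Suc one_unitri intro: unitri_mult\<close>)

lemma power_eq_seq_prod:
  assumes "u \<in> carrier_mat d d"
  shows "u ^\<^sub>m n = seq_prod d (\<lambda>_. u) n"
  by (induction n) (use assms in \<open>auto simp: seq_prod_0 seq_prod_Suc\<close>)

lemma seq_prod_entry_increment:
  assumes "\<forall>n\<ge>1. vs n \<in> unitri d" "i \<le> j" "j < d"
  shows "seq_prod d vs (Suc n) $$ (i, j) - seq_prod d vs n $$ (i, j) =
    (\<Sum>k\<in>{i..<j}. seq_prod d vs n $$ (i, k) * vs (Suc n) $$ (k, j))"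
  using unitri_mult_entry[OF seq_prod_unitri[OF assms(1)], of "vs (Suc n)"] assms
  by (simp add: seq_prod_Suc)

lemma seq_prod_superdiag_increment:
  assumes "\<forall>n\<ge>1. vs n \<in> unitri d" "Suc i < d"
  shows "seq_prod d vs (Suc n) $$ (i, Suc i) - seq_prod d vs n $$ (i, Suc i) = vs (Suc n) $$ (i, Suc i)"
  using seq_prod_entry_increment[OF assms(1), of i "Suc i" n] assms
    unitriD(3)[OF seq_prod_unitri[OF assms(1)], of i n]
  by simp

lemma bounded_mats_entry_bound:
  assumes "bounded_mats S" "S \<subseteq> carrier_mat d d"
  obtains B where "0 \<le> B" "\<And>A k l. A \<in> S \<Longrightarrow> k < d \<Longrightarrow> l < d \<Longrightarrow> \<bar>A $$ (k, l)\<bar> \<le> B"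
proof -
  obtain B where B: "\<forall>A\<in>S. \<forall>k<dim_row A. \<forall>l<dim_col A. \<bar>A $$ (k, l)\<bar> \<le> B"
    using assms(1) unfolding bounded_mats_def by blast
  have "\<bar>A $$ (k, l)\<bar> \<le> \<bar>B\<bar>" if "A \<in> S" "k < d" "l < d" for A k l
    using bspec[OF B that(1)] that(2,3) subsetD[OF assms(2) that(1)] by fastforce
  then show thesis
    by (intro that[of "\<bar>B\<bar>"]) auto
qed

section \<open>Polynomial growth of the entries\<close>

lemma abs_le_of_increments_le:
  fixes x :: "nat \<Rightarrow> real"
  assumes "x 0 = 0" "\<And>n. n < N \<Longrightarrow> \<bar>x (Suc n) - x n\<bar> \<le> c"
  shows "\<bar>x N\<bar> \<le> real N * c"
proof -
  have "\<bar>x N\<bar> = \<bar>\<Sum>n<N. x (Suc n) - x n\<bar>"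
    using assms(1) by (simp add: sum_lessThan_telescope)
  also have "\<dots> \<le> (\<Sum>n<N. \<bar>x (Suc n) - x n\<bar>)"
    by (rule sum_abs)
  also have "\<dots> \<le> real N * c"
    using sum_bounded_above[of "{..<N}" "\<lambda>n. \<bar>x (Suc n) - x n\<bar>" c] assms(2) by simp
  finally show ?thesis .
qed

lemma abs_sum_lower_terms_le:
  fixes x v :: "nat \<Rightarrow> real"
  assumes R: "1 \<le> R" "real (Suc m) * B \<le> R" and n: "n < N"
    and x: "\<And>k. k \<in> {i..<i + Suc m} \<Longrightarrow> \<bar>x k\<bar> \<le> R ^ (k - i) * real n ^ (k - i)"
    and v: "\<And>k. k \<in> {i..<i + Suc m} \<Longrightarrow> \<bar>v k\<bar> \<le> B"
  shows "\<bar>\<Sum>k\<in>{i..<i + Suc m}. x k * v k\<bar> \<le> R ^ Suc m * real N ^ m"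
proof -
  have B: "0 \<le> B"
    using v[of i] by simp
  have summand: "\<bar>x k * v k\<bar> \<le> B * (R ^ m * real N ^ m)" if k: "k \<in> {i..<i + Suc m}" for k
  proof -
    have "R ^ (k - i) \<le> R ^ m"
      using k R by (intro power_increasing) auto
    moreover have "real n ^ (k - i) \<le> real N ^ m"
    proof -
      have "real n ^ (k - i) \<le> real N ^ (k - i)"
        using n by (intro power_mono) auto
      also have "\<dots> \<le> real N ^ m"
        using k n by (intro power_increasing) auto
      finally show ?thesis .
    qed
    ultimately have "R ^ (k - i) * real n ^ (k - i) \<le> R ^ m * real N ^ m"
      using R by (intro mult_mono) auto
    then show ?thesis
      using x[OF k] v[OF k] B by (simp add: abs_mult mult.commute mult_mono)
  qed
  have "\<bar>\<Sum>k\<in>{i..<i + Suc m}. x k * v k\<bar> \<le> (\<Sum>k\<in>{i..<i + Suc m}. \<bar>x k * v k\<bar>)"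
    by (rule sum_abs)
  also have "\<dots> \<le> real (Suc m) * (B * (R ^ m * real N ^ m))"
    using sum_bounded_above[of "{i..<i + Suc m}", OF summand] by simp
  also have "\<dots> \<le> R * (R ^ m * real N ^ m)"
    using mult_right_mono[OF R(2), of "R ^ m * real N ^ m"] R(1) by (simp add: mult.assoc)
  finally show ?thesis by simp
qed

lemma poly_bound_mono:
  assumes "n \<le> N" "0 \<le> a" "0 \<le> E"
  shows "a * real n ^ Suc m + E * real n ^ m \<le> a * real N ^ Suc m + E * real N ^ m"
  using assms by (intro add_mono mult_left_mono power_mono) auto

locale unitri_seq =
  fixes d :: nat and vs :: "nat \<Rightarrow> real mat" and B M :: real
  assumes vs_unitri: "\<forall>n\<ge>1. vs n \<in> unitri d"
    and entry_bound: "\<forall>n\<ge>1. \<forall>k<d. \<forall>l<d. \<bar>vs n $$ (k, l)\<bar> \<le> B"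
    and superdiag_bound: "\<forall>n\<ge>1. \<forall>k. Suc k < d \<longrightarrow> \<bar>vs n $$ (k, Suc k)\<bar> \<le> M"
    and B_nonneg: "0 \<le> B" and M_nonneg: "0 \<le> M"
begin

abbreviation P :: "nat \<Rightarrow> real mat" where
  "P \<equiv> seq_prod d vs"

lemma P_unitri: "P n \<in> unitri d"
  using seq_prod_unitri[OF vs_unitri] .

lemma lower_terms_sum_le:
  assumes x: "\<And>k. k \<in> {i..<i + Suc m} \<Longrightarrow> \<bar>x k\<bar> \<le> (real d * B + 1) ^ (k - i) * real n ^ (k - i)"
    and j: "i + Suc m \<le> j" "j < d" and n: "n < N"
  shows "\<bar>\<Sum>k\<in>{i..<i + Suc m}. x k * vs (Suc n) $$ (k, j)\<bar> \<le> (real d * B + 1) ^ Suc m * real N ^ m"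
proof (rule abs_sum_lower_terms_le[OF _ _ n x])
  show "1 \<le> real d * B + 1"
    using B_nonneg by simp
  show "real (Suc m) * B \<le> real d * B + 1"
    using B_nonneg j mult_right_mono[of "real (Suc m)" "real d" B] by simp
  show "\<bar>vs (Suc n) $$ (k, j)\<bar> \<le> B" if "k \<in> {i..<i + Suc m}" for k
    using entry_bound that j by simp
qed

lemma P_entry_bound:
  assumes "i \<le> j" "j < d"
  shows "\<bar>P N $$ (i, j)\<bar> \<le> (real d * B + 1) ^ (j - i) * real N ^ (j - i)"
  using assms
proof (induction j arbitrary: N rule: less_induct)
  case (less j)
  show ?case
  proof (cases "j = i")
    case True
    then show ?thesis
      using unitriD(3)[OF P_unitri] less.prems by simp
  next
    case False
    then obtain m where j: "j = i + Suc m"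
      using less.prems less_imp_Suc_add[of i j] by auto
    have "\<bar>P N $$ (i, j)\<bar> \<le> real N * ((real d * B + 1) ^ Suc m * real N ^ m)"
    proof (rule abs_le_of_increments_le)
      show "P 0 $$ (i, j) = 0"
        using less.prems j by (simp add: seq_prod_0)
      fix n assume n: "n < N"
      have "P (Suc n) $$ (i, j) - P n $$ (i, j) =
          (\<Sum>k\<in>{i..<i + Suc m}. P n $$ (i, k) * vs (Suc n) $$ (k, j))"
        using seq_prod_entry_increment[OF vs_unitri] less.prems j by simp
      also have "\<bar>\<dots>\<bar> \<le> (real d * B + 1) ^ Suc m * real N ^ m"
        using less.IH less.prems j n by (intro lower_terms_sum_le) auto
      finally show "\<bar>P (Suc n) $$ (i, j) - P n $$ (i, j)\<bar> \<le> (real d * B + 1) ^ Suc m * real N ^ m" .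
    qed
    then show ?thesis
      using j by (simp add: algebra_simps)
  qed
qed

lemma P_increment_top_term:
  assumes i: "i + Suc (Suc m) < d" and n: "n < N"
  shows "\<bar>P (Suc n) $$ (i, i + Suc (Suc m)) - P n $$ (i, i + Suc (Suc m))
      - P n $$ (i, i + Suc m) * vs (Suc n) $$ (i + Suc m, i + Suc (Suc m))\<bar>
    \<le> (real d * B + 1) ^ Suc m * real N ^ m"
proof -
  let ?j = "i + Suc (Suc m)"
  have "P (Suc n) $$ (i, ?j) - P n $$ (i, ?j) - P n $$ (i, i + Suc m) * vs (Suc n) $$ (i + Suc m, ?j)
      = (\<Sum>k\<in>{i..<i + Suc m}. P n $$ (i, k) * vs (Suc n) $$ (k, ?j))"
    using seq_prod_entry_increment[OF vs_unitri, of i ?j n] i by simp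
  also have "\<bar>\<dots>\<bar> \<le> (real d * B + 1) ^ Suc m * real N ^ m"
    using P_entry_bound i n by (intro lower_terms_sum_le) auto
  finally show ?thesis .
qed

lemma P_increment_le:
  assumes i: "i + Suc (Suc m) < d" and n: "n < N"
    and top: "\<bar>P n $$ (i, i + Suc m)\<bar> \<le> M ^ Suc m * real N ^ Suc m + E * real N ^ m"
  shows "\<bar>P (Suc n) $$ (i, i + Suc (Suc m)) - P n $$ (i, i + Suc (Suc m))\<bar>
    \<le> M ^ Suc (Suc m) * real N ^ Suc m + ((real d * B + 1) ^ Suc m + M * E) * real N ^ m"
proof -
  have "\<bar>P n $$ (i, i + Suc m) * vs (Suc n) $$ (i + Suc m, i + Suc (Suc m))\<bar>
      \<le> (M ^ Suc m * real N ^ Suc m + E * real N ^ m) * M"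
    unfolding abs_mult using top superdiag_bound i by (intro mult_mono) auto
  then have "\<bar>P (Suc n) $$ (i, i + Suc (Suc m)) - P n $$ (i, i + Suc (Suc m))\<bar>
      \<le> (real d * B + 1) ^ Suc m * real N ^ m + (M ^ Suc m * real N ^ Suc m + E * real N ^ m) * M"
    using P_increment_top_term[OF i n] by linarith
  also have "\<dots> = M ^ Suc (Suc m) * real N ^ Suc m + ((real d * B + 1) ^ Suc m + M * E) * real N ^ m"
    by (simp add: algebra_simps)
  finally show ?thesis .
qed

lemma P_leading_bound:
  "\<exists>E\<ge>0. \<forall>N i. i + Suc m < d \<longrightarrow>
    \<bar>P N $$ (i, i + Suc m)\<bar> \<le> M ^ Suc m * real N ^ Suc m + E * real N ^ m"
proof (induction m)
  case 0
  have "\<bar>P N $$ (i, Suc i)\<bar> \<le> real N * M" if "Suc i < d" for N i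
    using that superdiag_bound seq_prod_superdiag_increment[OF vs_unitri that]
    by (intro abs_le_of_increments_le) (auto simp: seq_prod_0)
  then show ?case
    by (intro exI[of _ 0]) (simp add: mult.commute)
next
  case (Suc m)
  obtain E where E: "0 \<le> E"
    "\<And>N i. i + Suc m < d \<Longrightarrow> \<bar>P N $$ (i, i + Suc m)\<bar> \<le> M ^ Suc m * real N ^ Suc m + E * real N ^ m"
    using Suc.IH by blast
  define E' where "E' = (real d * B + 1) ^ Suc m + M * E"
  have "\<bar>P N $$ (i, i + Suc (Suc m))\<bar> \<le> real N * (M ^ Suc (Suc m) * real N ^ Suc m + E' * real N ^ m)"
    if i: "i + Suc (Suc m) < d" for N i
  proof (rule abs_le_of_increments_le)
    show "P 0 $$ (i, i + Suc (Suc m)) = 0"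
      using i by (simp add: seq_prod_0)
    fix n assume n: "n < N"
    have "\<bar>P n $$ (i, i + Suc m)\<bar> \<le> M ^ Suc m * real n ^ Suc m + E * real n ^ m"
      using E(2) i by simp
    also have "\<dots> \<le> M ^ Suc m * real N ^ Suc m + E * real N ^ m"
      using n M_nonneg E(1) by (intro poly_bound_mono) auto
    finally show "\<bar>P (Suc n) $$ (i, i + Suc (Suc m)) - P n $$ (i, i + Suc (Suc m))\<bar>
        \<le> M ^ Suc (Suc m) * real N ^ Suc m + E' * real N ^ m"
      unfolding E'_def by (rule P_increment_le[OF i n])
  qed
  moreover have "0 \<le> E'"
    using B_nonneg M_nonneg E(1) by (simp add: E'_def)
  ultimately show ?case
    by (intro exI[of _ E']) (simp add: algebra_simps)
qed

end

locale unitri_seq_pair = v: unitri_seq d vs B M + w: unitri_seq d ws B M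
  for d :: nat and vs ws :: "nat \<Rightarrow> real mat" and B M :: real +
  fixes \<delta> :: real
  assumes superdiag_close: "\<forall>n\<ge>1. \<forall>k. Suc k < d \<longrightarrow> \<bar>vs n $$ (k, Suc k) - ws n $$ (k, Suc k)\<bar> \<le> \<delta>"
    and \<delta>_nonneg: "0 \<le> \<delta>"
begin

lemma diff_increment_le:
  assumes i: "i + Suc (Suc m) < d" and n: "n < N"
    and diff: "\<bar>v.P n $$ (i, i + Suc m) - w.P n $$ (i, i + Suc m)\<bar> \<le> a * real N ^ Suc m + F * real N ^ m"
    and w: "\<bar>w.P n $$ (i, i + Suc m)\<bar> \<le> M ^ Suc m * real N ^ Suc m + E * real N ^ m"
  shows "\<bar>(v.P (Suc n) $$ (i, i + Suc (Suc m)) - w.P (Suc n) $$ (i, i + Suc (Suc m)))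
      - (v.P n $$ (i, i + Suc (Suc m)) - w.P n $$ (i, i + Suc (Suc m)))\<bar>
    \<le> (a * M + \<delta> * M ^ Suc m) * real N ^ Suc m
      + (2 * (real d * B + 1) ^ Suc m + M * F + \<delta> * E) * real N ^ m"
proof -
  let ?l = "i + Suc m" and ?j = "i + Suc (Suc m)"
  let ?v = "vs (Suc n) $$ (?l, ?j)" and ?w = "ws (Suc n) $$ (?l, ?j)"
  have "\<bar>(v.P n $$ (i, ?l) - w.P n $$ (i, ?l)) * ?v\<bar> \<le> (a * real N ^ Suc m + F * real N ^ m) * M"
    unfolding abs_mult using diff v.superdiag_bound i by (intro mult_mono) auto
  moreover have "\<bar>w.P n $$ (i, ?l) * (?v - ?w)\<bar> \<le> (M ^ Suc m * real N ^ Suc m + E * real N ^ m) * \<delta>"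
    unfolding abs_mult using w superdiag_close i by (intro mult_mono) auto
  moreover have "v.P n $$ (i, ?l) * ?v - w.P n $$ (i, ?l) * ?w
      = (v.P n $$ (i, ?l) - w.P n $$ (i, ?l)) * ?v + w.P n $$ (i, ?l) * (?v - ?w)"
    by (simp add: algebra_simps)
  ultimately have "\<bar>(v.P (Suc n) $$ (i, ?j) - w.P (Suc n) $$ (i, ?j)) - (v.P n $$ (i, ?j) - w.P n $$ (i, ?j))\<bar>
      \<le> 2 * (real d * B + 1) ^ Suc m * real N ^ m
        + (a * real N ^ Suc m + F * real N ^ m) * M + (M ^ Suc m * real N ^ Suc m + E * real N ^ m) * \<delta>"
    using v.P_increment_top_term[OF i n] w.P_increment_top_term[OF i n] by linarith
  also have "\<dots> = (a * M + \<delta> * M ^ Suc m) * real N ^ Suc m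
      + (2 * (real d * B + 1) ^ Suc m + M * F + \<delta> * E) * real N ^ m"
    by (simp add: algebra_simps)
  finally show ?thesis .
qed

lemma diff_leading_bound:
  "\<exists>F\<ge>0. \<forall>N i. i + Suc m < d \<longrightarrow>
    \<bar>v.P N $$ (i, i + Suc m) - w.P N $$ (i, i + Suc m)\<bar>
      \<le> real (Suc m) * \<delta> * M ^ m * real N ^ Suc m + F * real N ^ m"
proof (induction m)
  case 0
  have "\<bar>v.P N $$ (i, Suc i) - w.P N $$ (i, Suc i)\<bar> \<le> real N * \<delta>" if "Suc i < d" for N i
    using that superdiag_close seq_prod_superdiag_increment[OF v.vs_unitri that]
      seq_prod_superdiag_increment[OF w.vs_unitri that]
    by (intro abs_le_of_increments_le) (auto simp: seq_prod_0 algebra_simps)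
  then show ?case
    by (intro exI[of _ 0]) (simp add: mult.commute)
next
  case (Suc m)
  let ?a = "real (Suc m) * \<delta> * M ^ m"
  obtain F where F: "0 \<le> F" "\<And>N i. i + Suc m < d \<Longrightarrow>
      \<bar>v.P N $$ (i, i + Suc m) - w.P N $$ (i, i + Suc m)\<bar> \<le> ?a * real N ^ Suc m + F * real N ^ m"
    using Suc.IH by blast
  obtain E where E: "0 \<le> E" "\<And>N i. i + Suc m < d \<Longrightarrow>
      \<bar>w.P N $$ (i, i + Suc m)\<bar> \<le> M ^ Suc m * real N ^ Suc m + E * real N ^ m"
    using w.P_leading_bound by blast
  define F' where "F' = 2 * (real d * B + 1) ^ Suc m + M * F + \<delta> * E"
  have "\<bar>v.P N $$ (i, i + Suc (Suc m)) - w.P N $$ (i, i + Suc (Suc m))\<bar>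
      \<le> real N * (real (Suc (Suc m)) * \<delta> * M ^ Suc m * real N ^ Suc m + F' * real N ^ m)"
    if i: "i + Suc (Suc m) < d" for N i
  proof (rule abs_le_of_increments_le)
    show "v.P 0 $$ (i, i + Suc (Suc m)) - w.P 0 $$ (i, i + Suc (Suc m)) = 0"
      by (simp add: seq_prod_0)
    fix n assume n: "n < N"
    have "\<bar>v.P n $$ (i, i + Suc m) - w.P n $$ (i, i + Suc m)\<bar> \<le> ?a * real n ^ Suc m + F * real n ^ m"
      using F(2) i by simp
    also have "\<dots> \<le> ?a * real N ^ Suc m + F * real N ^ m"
      using n v.M_nonneg \<delta>_nonneg F(1) by (intro poly_bound_mono) auto
    finally have diff: "\<bar>v.P n $$ (i, i + Suc m) - w.P n $$ (i, i + Suc m)\<bar>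
        \<le> ?a * real N ^ Suc m + F * real N ^ m" .
    have "\<bar>w.P n $$ (i, i + Suc m)\<bar> \<le> M ^ Suc m * real n ^ Suc m + E * real n ^ m"
      using E(2) i by simp
    also have "\<dots> \<le> M ^ Suc m * real N ^ Suc m + E * real N ^ m"
      using n v.M_nonneg E(1) by (intro poly_bound_mono) auto
    finally have w: "\<bar>w.P n $$ (i, i + Suc m)\<bar> \<le> M ^ Suc m * real N ^ Suc m + E * real N ^ m" .
    have "?a * M + \<delta> * M ^ Suc m = real (Suc (Suc m)) * \<delta> * M ^ Suc m"
      by (simp add: algebra_simps)
    then show "\<bar>(v.P (Suc n) $$ (i, i + Suc (Suc m)) - w.P (Suc n) $$ (i, i + Suc (Suc m)))
        - (v.P n $$ (i, i + Suc (Suc m)) - w.P n $$ (i, i + Suc (Suc m)))\<bar>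
        \<le> real (Suc (Suc m)) * \<delta> * M ^ Suc m * real N ^ Suc m + F' * real N ^ m"
      using diff_increment_le[OF i n diff w] unfolding F'_def by simp
  qed
  moreover have "0 \<le> F'"
    using v.B_nonneg v.M_nonneg F(1) E(1) \<delta>_nonneg by (simp add: F'_def)
  ultimately show ?case
    by (intro exI[of _ F']) (simp add: algebra_simps)
qed

end

section \<open>Dilations\<close>

lemma theta_entry:
  assumes "A \<in> carrier_mat d d" "i < d" "j < d"
  shows "theta t A $$ (i, j) = (if i \<le> j then t ^ (j - i) * A $$ (i, j) else A $$ (i, j))"
  using assms unfolding theta_def by auto

lemma limsup_scaled_le:
  fixes g :: "nat \<Rightarrow> real"
  assumes g: "\<And>N. 1 \<le> N \<Longrightarrow> \<bar>g N\<bar> \<le> a * real N ^ Suc m + F * real N ^ m"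
  shows "limsup (\<lambda>N. ereal \<bar>(1 / real N) ^ Suc m * g N\<bar>) \<le> ereal a"
proof -
  have "\<forall>\<^sub>F N in sequentially. ereal \<bar>(1 / real N) ^ Suc m * g N\<bar> \<le> ereal (a + F / real N)"
  proof (rule eventually_sequentiallyI)
    fix N :: nat assume N: "1 \<le> N"
    have "\<bar>(1 / real N) ^ Suc m * g N\<bar> = (1 / real N) ^ Suc m * \<bar>g N\<bar>"
      by (simp add: abs_mult)
    also have "\<dots> \<le> (1 / real N) ^ Suc m * (a * real N ^ Suc m + F * real N ^ m)"
      using g[OF N] by (intro mult_left_mono) auto
    also have "\<dots> = a + F / real N"
      using N by (simp add: field_simps)
    finally show "ereal \<bar>(1 / real N) ^ Suc m * g N\<bar> \<le> ereal (a + F / real N)"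
      by simp
  qed
  then have "limsup (\<lambda>N. ereal \<bar>(1 / real N) ^ Suc m * g N\<bar>) \<le> limsup (\<lambda>N. ereal (a + F / real N))"
    by (rule Limsup_mono)
  also have "\<dots> = ereal a"
    using tendsto_add[OF tendsto_const lim_const_over_n[of F], of a]
    by (intro lim_imp_Limsup) auto
  finally show ?thesis .
qed

context unitri_seq_pair
begin

lemma limsup_dilated_diff_le:
  assumes ij: "i < d" "j < d"
  shows "limsup (\<lambda>N. ereal \<bar>theta (1 / real N) (v.P N) $$ (i, j) - theta (1 / real N) (w.P N) $$ (i, j)\<bar>)
    \<le> ereal (real d * \<delta> * (M + 1) ^ d)"
proof (cases "i < j")
  case False
  then have "theta (1 / real N) (v.P N) $$ (i, j) = theta (1 / real N) (w.P N) $$ (i, j)" for N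
    using ij unitri_entry_le_diag[OF v.P_unitri w.P_unitri]
      theta_entry[OF unitriD(1)[OF v.P_unitri]] theta_entry[OF unitriD(1)[OF w.P_unitri]]
    by simp
  then show ?thesis
    using \<delta>_nonneg v.M_nonneg by (simp add: Limsup_const)
next
  case True
  then obtain m where j: "j = i + Suc m"
    using less_imp_Suc_add by fastforce
  obtain F where F: "\<And>N. \<bar>v.P N $$ (i, j) - w.P N $$ (i, j)\<bar>
      \<le> real (Suc m) * \<delta> * M ^ m * real N ^ Suc m + F * real N ^ m"
    using diff_leading_bound[of m] ij j by blast
  have "limsup (\<lambda>N. ereal \<bar>theta (1 / real N) (v.P N) $$ (i, j) - theta (1 / real N) (w.P N) $$ (i, j)\<bar>)
    = limsup (\<lambda>N. ereal \<bar>(1 / real N) ^ Suc m * (v.P N $$ (i, j) - w.P N $$ (i, j))\<bar>)"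
    using ij j theta_entry[OF unitriD(1)[OF v.P_unitri]] theta_entry[OF unitriD(1)[OF w.P_unitri]]
    by (simp add: right_diff_distrib)
  also have "\<dots> \<le> ereal (real (Suc m) * \<delta> * M ^ m)"
    using F by (rule limsup_scaled_le)
  also have "\<dots> \<le> ereal (real d * \<delta> * (M + 1) ^ d)"
  proof -
    have "M ^ m \<le> (M + 1) ^ m"
      using v.M_nonneg by (intro power_mono) auto
    also have "\<dots> \<le> (M + 1) ^ d"
      using v.M_nonneg ij j by (intro power_increasing) auto
    finally have "M ^ m \<le> (M + 1) ^ d" .
    moreover have "real (Suc m) \<le> real d"
      using ij j by simp
    ultimately show ?thesis
      using v.M_nonneg \<delta>_nonneg by (simp add: mult_mono mult_left_mono mult.assoc)
  qed
  finally show ?thesis .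
qed

end

lemma limsup_dilated_prod_power_diff_le:
  assumes u: "u \<in> unitri d" and us: "\<forall>n\<ge>1. us n \<in> unitri d"
    and bounded: "bounded_mats ({u} \<union> {us n | n. n \<ge> 1})"
    and u_M: "\<forall>k. Suc k < d \<longrightarrow> \<bar>u $$ (k, Suc k)\<bar> \<le> M"
    and us_M: "\<forall>n\<ge>1. \<forall>k. Suc k < d \<longrightarrow> \<bar>us n $$ (k, Suc k)\<bar> \<le> M"
    and us_u: "\<forall>n\<ge>1. \<forall>k. Suc k < d \<longrightarrow> \<bar>us n $$ (k, Suc k) - u $$ (k, Suc k)\<bar> \<le> \<delta>"
    and M: "0 \<le> M" and \<delta>: "0 \<le> \<delta>" and ij: "i < d" "j < d"
  shows "limsup (\<lambda>n. ereal \<bar>theta (1 / real n) (seq_prod d us n) $$ (i, j)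
      - theta (1 / real n) (u ^\<^sub>m n) $$ (i, j)\<bar>) \<le> ereal (real d * \<delta> * (M + 1) ^ d)"
proof -
  have "{u} \<union> {us n | n. n \<ge> 1} \<subseteq> carrier_mat d d"
    using u us unitriD(1) by blast
  then obtain B where B: "0 \<le> B"
    "\<And>A k l. A \<in> {u} \<union> {us n | n. n \<ge> 1} \<Longrightarrow> k < d \<Longrightarrow> l < d \<Longrightarrow> \<bar>A $$ (k, l)\<bar> \<le> B"
    using bounded bounded_mats_entry_bound by blast
  have "\<forall>n\<ge>1. \<forall>k<d. \<forall>l<d. \<bar>us n $$ (k, l)\<bar> \<le> B"
    using B(2) by blast
  then interpret unitri_seq_pair d us "\<lambda>_. u" B M \<delta>
    using u us u_M us_M us_u M \<delta> B by unfold_locales auto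
  show ?thesis
    using limsup_dilated_diff_le[OF ij] unfolding power_eq_seq_prod[OF unitriD(1)[OF u]] .
qed

theorem mainTheorem15:
  fixes d :: nat and \<epsilon> M :: real
  assumes "\<epsilon> > 0" and "M > 0"
  shows "\<exists>\<delta>>0. \<forall>(u :: real mat) (us :: nat \<Rightarrow> real mat).
     u \<in> unitri d \<longrightarrow> (\<forall>n\<ge>1. us n \<in> unitri d) \<longrightarrow>
     bounded_mats ({u} \<union> {us n | n. n \<ge> 1}) \<longrightarrow>
     (\<forall>i. Suc i < d \<longrightarrow> \<bar>u $$ (i, Suc i)\<bar> \<le> M) \<longrightarrow>
     (\<forall>n\<ge>1. \<forall>i. Suc i < d \<longrightarrow> \<bar>us n $$ (i, Suc i)\<bar> \<le> M) \<longrightarrow>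
     (\<forall>n\<ge>1. \<forall>i. Suc i < d \<longrightarrow> \<bar>us n $$ (i, Suc i) - u $$ (i, Suc i)\<bar> \<le> \<delta>) \<longrightarrow>
     (\<forall>i<d. \<forall>j<d.
        limsup (\<lambda>n. ereal \<bar>theta (1 / real n) (seq_prod d us n) $$ (i, j)
                          - theta (1 / real n) (u ^\<^sub>m n) $$ (i, j)\<bar>) < ereal \<epsilon>)"
proof -
  define \<delta> where "\<delta> = \<epsilon> / (real d + 1) / (M + 1) ^ d"
  have \<delta>: "0 < \<delta>"
    unfolding \<delta>_def using assms by simp
  have "real d * \<delta> * (M + 1) ^ d = \<epsilon> * real d / (real d + 1)"
    unfolding \<delta>_def using assms(2) by simp
  also have "\<dots> < \<epsilon>"
    using assms(1) by (simp add: field_simps)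
  finally have \<delta>_small: "ereal (real d * \<delta> * (M + 1) ^ d) < ereal \<epsilon>"
    by simp
  show ?thesis
    using assms(2) \<delta>
    by (intro exI[of _ \<delta>] conjI allI impI order.strict_trans1[OF limsup_dilated_prod_power_diff_le \<delta>_small])
      auto
qed

end
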